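(* Let $D\subset\Phi^+$ be an orthogonal subset satisfying Assumption (A). (a) Let $\beta\in D\cap\mathcal C_j$, $\alpha\in S^+(\beta)$, and suppose $\beta-\alpha\in\mathcal M_j$. Then every $\beta'\in D$ of the form $\beta'=\alpha+\delta$ with $\delta\in\Phi^+$ lies in $\mathcal C_j$. (b) Suppose $|D\cap\mathcal C_j|=2$, say $D\cap\mathcal C_j=\{\beta,\beta'\}$, let $\gamma\in\mathcal M_j$ with $\mathrm{col}(\gamma)\ne\pm\mathrm{row}(\beta)$. Then every root of $D$ of the form $\gamma+\delta$ with $\delta\in\mathcal P$ lies in $\mathcal C_j$.
   Context: Let $\Phi$ be a root system of type $B_n$, $C_n$ or $D_n$ in $\mathbb R^n$ with standard basis $\varepsilon_1,\dots,\varepsilon_n$ and positive roots $\Phi^+=\{\varepsilon_i\pm\varepsilon_j:1\le i<j\le n\}\cup\Phi_1^+$, where $\Phi_1^+=\emptyset$ for $D_n$, $\{\varepsilon_i\}$ for $B_n$, $\{2\varepsilon_i\}$ for $C_n$. $D\subset\Phi^+$ is orthogonal if its roots are pairwise orthogonal. Assumption (A): if $\Phi=B_n$, $D$ contains at most one root of the form $\varepsilon_i$; if $\Phi=C_n$, $D$ does not contain both $\varepsilon_i-\varepsilon_j$ and $\varepsilon_i+\varepsilon_j$ for any $i<j$. $\mathrm{col}(\varepsilon_i\pm\varepsilon_j)=\mathrm{col}(\varepsilon_i)=\mathrm{col}(2\varepsilon_i)=i$; $\mathrm{row}(\varepsilon_i\pm\varepsilon_j)=\mp j$, $\mathrm{row}(\varepsilon_i)=0$,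 $\mathrm{row}(2\varepsilon_i)=-i$. $\mathcal R_i=\{\alpha\in\Phi^+:\mathrm{row}(\alpha)=i\}$, $\mathcal C_j=\{\alpha\in\Phi^+:\mathrm{col}(\alpha)=j\}$. For $\beta\in\Phi^+$, $S(\beta)=\{\alpha\in\Phi^+:\beta-\alpha\in\Phi^+\}$; $S^+(\beta)=\{\varepsilon_i+\varepsilon_l:i<l\le n\}$ if $\Phi=C_n$ and $\beta=2\varepsilon_i$, and $S^+(\beta)=S(\beta)\cap\mathcal C_{\mathrm{col}(\beta)}$ otherwise; $S^-(\beta)=S(\beta)\setminus S^+(\beta)$. Let $j_1<\dots<j_t$ be the indices of columns containing roots of $D$; recursively $\mathcal M_{j_i}=\{\gamma\in S^-(\beta):\beta\in D\cap\mathcal C_{j_i},\ \gamma\notin\bigcup_{l<i}\mathcal M_{j_l},\ \beta-\gamma\notin\bigcup_{l<i}\mathcal M_{j_l}\}$, and $\mathcal M_j=\emptyset$ for columns $j$ containing no root of $D$; $\mathcal M=\bigcup_i\mathcal M_{j_i}$, $\mathcal P=\Phi^+\setminus\mathcal M$. *)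

theory Defs
  imports Main "HOL-Library.Function_Algebras"
begin

datatype rtype = TB | TC | TD

text \<open>Positive roots, by shape:
  RPlus i j = eps_i + eps_j, RMinus i j = eps_i - eps_j (intended i < j),
  RShort i = eps_i (type B), RLong i = 2 eps_i (type C).\<close>
datatype root = RPlus nat nat | RMinus nat nat | RShort nat | RLong nat

definition unitv :: "nat \<Rightarrow> nat \<Rightarrow> int" where
  "unitv i = (\<lambda>k. if k = i then 1 else 0)"

fun vec :: "root \<Rightarrow> nat \<Rightarrow> int" where
  "vec (RPlus i j) = unitv i + unitv j"
| "vec (RMinus i j) = unitv i - unitv j"
| "vec (RShort i) = unitv i"
| "vec (RLong i) = 2 * unitv i"

definition pos_roots :: "rtype \<Rightarrow> nat \<Rightarrow> root set" where
  "pos_roots t n =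
     {RPlus i j | i j. 1 \<le> i \<and> i < j \<and> j \<le> n}
   \<union> {RMinus i j | i j. 1 \<le> i \<and> i < j \<and> j \<le> n}
   \<union> (case t of TD \<Rightarrow> {}
        | TB \<Rightarrow> {RShort i | i. 1 \<le> i \<and> i \<le> n}
        | TC \<Rightarrow> {RLong i | i. 1 \<le> i \<and> i \<le> n})"

fun col :: "root \<Rightarrow> nat" where
  "col (RPlus i j) = i"
| "col (RMinus i j) = i"
| "col (RShort i) = i"
| "col (RLong i) = i"

fun row :: "root \<Rightarrow> int" where
  "row (RPlus i j) = - int j"
| "row (RMinus i j) = int j"
| "row (RShort i) = 0"
| "row (RLong i) = - int i"

definition inner :: "nat \<Rightarrow> root \<Rightarrow> root \<Rightarrow> int" where
  "inner n a b = (\<Sum>k\<in>{1..n}. vec a k * vec b k)"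

definition orthogonal_set :: "rtype \<Rightarrow> nat \<Rightarrow> root set \<Rightarrow> bool" where
  "orthogonal_set t n D \<longleftrightarrow> D \<subseteq> pos_roots t n \<and>
     (\<forall>a\<in>D. \<forall>b\<in>D. a \<noteq> b \<longrightarrow> inner n a b = 0)"

definition assumptionA :: "rtype \<Rightarrow> root set \<Rightarrow> bool" where
  "assumptionA t D \<longleftrightarrow>
     (t = TB \<longrightarrow> (\<forall>i k. RShort i \<in> D \<and> RShort k \<in> D \<longrightarrow> i = k)) \<and>
     (t = TC \<longrightarrow> (\<forall>i j. i < j \<longrightarrow> \<not> (RMinus i j \<in> D \<and> RPlus i j \<in> D)))"

definition Rows :: "rtype \<Rightarrow> nat \<Rightarrow> int \<Rightarrow> root set" where
  "Rows t n i = {a \<in> pos_roots t n. row a = i}"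

definition Cols :: "rtype \<Rightarrow> nat \<Rightarrow> nat \<Rightarrow> root set" where
  "Cols t n j = {a \<in> pos_roots t n. col a = j}"

definition S :: "rtype \<Rightarrow> nat \<Rightarrow> root \<Rightarrow> root set" where
  "S t n b = {a \<in> pos_roots t n. \<exists>g \<in> pos_roots t n. vec g = vec b - vec a}"

definition Splus :: "rtype \<Rightarrow> nat \<Rightarrow> root \<Rightarrow> root set" where
  "Splus t n b =
     (if t = TC \<and> b = RLong (col b)
      then {RPlus (col b) l | l. col b < l \<and> l \<le> n}
      else S t n b \<inter> Cols t n (col b))"

definition Sminus :: "rtype \<Rightarrow> nat \<Rightarrow> root \<Rightarrow> root set" where
  "Sminus t n b = S t n b - Splus t n b"

text \<open>The step of the recursion defining M_j, given the union prev of all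
  earlier M_l (l < j). Empty if column j contains no root of D.\<close>
definition Mstep :: "rtype \<Rightarrow> nat \<Rightarrow> root set \<Rightarrow> nat \<Rightarrow> root set \<Rightarrow> root set" where
  "Mstep t n D j prev =
     {g. \<exists>b \<in> D \<inter> Cols t n j. g \<in> Sminus t n b \<and> g \<notin> prev \<and>
         (\<forall>d \<in> pos_roots t n. vec d = vec b - vec g \<longrightarrow> d \<notin> prev)}"

primrec Mbefore :: "rtype \<Rightarrow> nat \<Rightarrow> root set \<Rightarrow> nat \<Rightarrow> root set" where
  "Mbefore t n D 0 = {}"
| "Mbefore t n D (Suc j) = Mbefore t n D j \<union> Mstep t n D j (Mbefore t n D j)"

definition Mcol :: "rtype \<Rightarrow> nat \<Rightarrow> root set \<Rightarrow> nat \<Rightarrow> root set" where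
  "Mcol t n D j = Mstep t n D j (Mbefore t n D j)"

definition Mset :: "rtype \<Rightarrow> nat \<Rightarrow> root set \<Rightarrow> root set" where
  "Mset t n D = Mbefore t n D (Suc n)"

definition Pset :: "rtype \<Rightarrow> nat \<Rightarrow> root set \<Rightarrow> root set" where
  "Pset t n D = pos_roots t n - Mset t n D"

end

theory Submission
  imports Defs
begin

(* Every positive root x that is a sum p + q of two positive roots is such a sum in
   an essentially unique way: one summand p lies in the column of x (so p is in
   S^+(x)) and the other one q lies in S^-(x).  The recursion defining the sets M_j then yields a closure property:
   if the S^- summand x of a root b of D in column p is not in M_1, ..., M_p, then its
   partner was already in M_1, ..., M_(p-1) (partner_in_earlier_M).

   Both parts of the lemma are proved by contradiction: assuming a root of D outside
   column j, the closure property produces a root of D in an even earlier column,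
   and a finite case distinction over the shapes of the roots involved shows that
   this root cannot be orthogonal to the roots already found (using Assumption (A)
   for two short roots in type B). *)

lemma pos_RPlus [simp]: "RPlus i j \<in> pos_roots t n \<longleftrightarrow> 1 \<le> i \<and> i < j \<and> j \<le> n"
  by (cases t) (auto simp: pos_roots_def)

lemma pos_RMinus [simp]: "RMinus i j \<in> pos_roots t n \<longleftrightarrow> 1 \<le> i \<and> i < j \<and> j \<le> n"
  by (cases t) (auto simp: pos_roots_def)

lemma pos_RShort [simp]: "RShort i \<in> pos_roots t n \<longleftrightarrow> t = TB \<and> 1 \<le> i \<and> i \<le> n"
  by (cases t) (auto simp: pos_roots_def)

lemma pos_RLong [simp]: "RLong i \<in> pos_roots t n \<longleftrightarrow> t = TC \<and> 1 \<le> i \<and> i \<le> n"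
  by (cases t) (auto simp: pos_roots_def)

lemma pos_root_col: "x \<in> pos_roots t n \<Longrightarrow> 1 \<le> col x \<and> col x \<le> n"
  by (cases x) auto

lemma Cols_iff: "b \<in> Cols t n j \<longleftrightarrow> b \<in> pos_roots t n \<and> col b = j"
  unfolding Cols_def by auto

fun supp :: "root \<Rightarrow> nat set" where
  "supp (RPlus i j) = {i, j}"
| "supp (RMinus i j) = {i, j}"
| "supp (RShort i) = {i}"
| "supp (RLong i) = {i}"

lemma finite_supp [simp]: "finite (supp x)"
  by (cases x) auto

lemma vec_apply [simp]:
  "vec (RPlus i j) k = unitv i k + unitv j k"
  "vec (RMinus i j) k = unitv i k - unitv j k"
  "vec (RShort i) k = unitv i k"
  "vec (RLong i) k = 2 * unitv i k"
  by (simp_all add: plus_fun_def fun_diff_def times_fun_def)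

lemma vec_outside_supp: "k \<notin> supp x \<Longrightarrow> vec x k = 0"
  by (cases x) (auto simp: unitv_def)

lemma vec_left_of_col: "x \<in> pos_roots t n \<Longrightarrow> k < col x \<Longrightarrow> vec x k = 0"
  by (cases x) (auto simp: unitv_def)

text \<open>Identities between coordinate vectors only need to be checked on the supports;
  this reduces them to finitely many integer equations.\<close>
lemma vec_eq_on_supp: "vec x = vec y \<longleftrightarrow> (\<forall>q \<in> supp x \<union> supp y. vec x q = vec y q)"
proof
  assume h: "\<forall>q \<in> supp x \<union> supp y. vec x q = vec y q"
  show "vec x = vec y"
  proof
    fix q
    show "vec x q = vec y q"
      using h vec_outside_supp[of q x] vec_outside_supp[of q y]
      by (cases "q \<in> supp x \<union> supp y") auto
  qed
qed auto

lemma vec_sum_on_supp: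
  "vec x = vec y + vec z \<longleftrightarrow> (\<forall>q \<in> supp x \<union> supp y \<union> supp z. vec x q = vec y q + vec z q)"
proof
  assume h: "\<forall>q \<in> supp x \<union> supp y \<union> supp z. vec x q = vec y q + vec z q"
  show "vec x = vec y + vec z"
  proof
    fix q
    show "vec x q = (vec y + vec z) q"
      using h vec_outside_supp[of q x] vec_outside_supp[of q y] vec_outside_supp[of q z]
      by (cases "q \<in> supp x \<union> supp y \<union> supp z") auto
  qed
qed auto

lemma vec_inj_pos_roots:
  "x \<in> pos_roots t n \<Longrightarrow> y \<in> pos_roots t n \<Longrightarrow> vec x = vec y \<Longrightarrow> x = y"
  by (cases x; cases y)
     (auto simp del: vec.simps simp add: vec_eq_on_supp unitv_def split: if_splits)

lemma vec_diff_eq_iff: "vec x = vec y - vec z \<longleftrightarrow> vec y = vec z + vec x"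
  by (metis add_diff_cancel_left' diff_add_cancel)

subsection \<open>Splitting a root into two positive roots\<close>

text \<open>col_split x p q: the root x is the sum p + q, where p is the summand lying in the
  column of x.  These are all splittings of positive roots of types B, C, D.\<close>
definition col_split :: "root \<Rightarrow> root \<Rightarrow> root \<Rightarrow> bool" where
  "col_split x p q \<longleftrightarrow>
     (\<exists>i m k. i < m \<and> m < k \<and> x = RMinus i k \<and> p = RMinus i m \<and> q = RMinus m k) \<or>
     (\<exists>i m k. i < m \<and> m < k \<and> x = RPlus i k \<and> p = RMinus i m \<and> q = RPlus m k) \<or>
     (\<exists>i k m. i < k \<and> k < m \<and> x = RPlus i k \<and> p = RMinus i m \<and> q = RPlus k m) \<or>
     (\<exists>i k m. i < k \<and> k < m \<and> x = RPlus i k \<and> p = RPlus i m \<and> q = RMinus k m) \<or>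
     (\<exists>i k. i < k \<and> x = RPlus i k \<and> p = RShort i \<and> q = RShort k) \<or>
     (\<exists>i m. i < m \<and> x = RShort i \<and> p = RMinus i m \<and> q = RShort m) \<or>
     (\<exists>i m. i < m \<and> x = RLong i \<and> p = RPlus i m \<and> q = RMinus i m) \<or>
     (\<exists>i k. i < k \<and> x = RPlus i k \<and> p = RMinus i k \<and> q = RLong k)"

lemma col_split_vec: "col_split x p q \<Longrightarrow> vec x = vec p + vec q"
  unfolding col_split_def by (auto simp del: vec.simps simp add: vec_sum_on_supp unitv_def)

lemma col_split_col: "col_split x p q \<Longrightarrow> col p = col x \<and> col x \<le> col q"
  unfolding col_split_def by auto

lemma col_split_first_pos:
  "col_split x p q \<Longrightarrow> x \<in> pos_roots t n \<Longrightarrow> q \<in> pos_roots t n \<Longrightarrow> p \<in> pos_roots t n"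
  unfolding col_split_def by auto

lemma col_split_cases:
  assumes "x \<in> pos_roots t n" "y \<in> pos_roots t n" "z \<in> pos_roots t n" "vec x = vec y + vec z"
  shows "col_split x y z \<or> col_split x z y"
  using assms
  by (cases x; cases y; cases z)
     (simp_all del: vec.simps add: vec_sum_on_supp unitv_def col_split_def split: if_splits)

lemma S_iff: "a \<in> S t n b \<longleftrightarrow> a \<in> pos_roots t n \<and> (\<exists>g \<in> pos_roots t n. vec b = vec a + vec g)"
  unfolding S_def vec_diff_eq_iff by auto

lemma Sminus_pos: "a \<in> Sminus t n b \<Longrightarrow> a \<in> pos_roots t n"
  unfolding Sminus_def by (auto simp: S_iff)

lemma col_split_S:
  assumes "col_split x p q" "x \<in> pos_roots t n" "p \<in> pos_roots t n" "q \<in> pos_roots t n"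
  shows "p \<in> Splus t n x \<and> q \<in> Sminus t n x"
proof -
  have sum: "vec x = vec p + vec q"
    using col_split_vec[OF assms(1)] .
  then have "p \<in> S t n x" "q \<in> S t n x"
    using assms(2-4) by (auto simp: S_iff add.commute)
  then show ?thesis
    using assms unfolding Sminus_def Splus_def Cols_def col_split_def by auto
qed

lemma Sminus_col_split:
  assumes "q \<in> Sminus t n x" "x \<in> pos_roots t n"
  obtains p where "p \<in> pos_roots t n" "col_split x p q"
proof -
  from assms(1) have q: "q \<in> pos_roots t n" and not_plus: "q \<notin> Splus t n x"
    and "\<exists>g \<in> pos_roots t n. vec x = vec q + vec g"
    unfolding Sminus_def by (auto simp: S_iff)
  then obtain g where g: "g \<in> pos_roots t n" "vec x = vec q + vec g"
    by blast
  have "\<not> col_split x q g"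
    using col_split_S[OF _ assms(2) q g(1)] not_plus by blast
  then show ?thesis
    using col_split_cases[OF assms(2) q g] that g(1) by blast
qed

lemma Splus_col_split:
  assumes "p \<in> Splus t n x" "x \<in> pos_roots t n"
  obtains q where "q \<in> pos_roots t n" "col_split x p q"
proof (cases "t = TC \<and> x = RLong (col x)")
  case True
  then obtain l where "p = RPlus (col x) l" "col x < l" "l \<le> n"
    using assms(1) unfolding Splus_def by auto
  moreover have "1 \<le> col x"
    using pos_root_col[OF assms(2)] by simp
  ultimately show ?thesis
    using that[of "RMinus (col x) l"] True unfolding col_split_def by auto
next
  case False
  then have "p \<in> S t n x"
    using assms(1) unfolding Splus_def by auto
  then obtain g where p: "p \<in> pos_roots t n" and g: "g \<in> pos_roots t n" "vec x = vec p + vec g"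
    unfolding S_iff by blast
  have "\<not> col_split x g p"
    using col_split_S[OF _ assms(2) g(1) p] assms(1) unfolding Sminus_def by blast
  then show ?thesis
    using col_split_cases[OF assms(2) p g] that g(1) by blast
qed

lemma inner_on_supp:
  assumes "supp x \<subseteq> {1..n}"
  shows "inner n x y = (\<Sum>q \<in> supp x. vec x q * vec y q)"
  unfolding inner_def by (rule sum.mono_neutral_right) (use assms vec_outside_supp in auto)

lemma inner_root:
  "1 \<le> i \<Longrightarrow> i < j \<Longrightarrow> j \<le> n \<Longrightarrow> inner n (RPlus i j) y = vec y i + vec y j"
  "1 \<le> i \<Longrightarrow> i < j \<Longrightarrow> j \<le> n \<Longrightarrow> inner n (RMinus i j) y = vec y i - vec y j"
  "1 \<le> i \<Longrightarrow> i \<le> n \<Longrightarrow> inner n (RShort i) y = vec y i"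
  "1 \<le> i \<Longrightarrow> i \<le> n \<Longrightarrow> inner n (RLong i) y = 2 * vec y i"
  by (subst inner_on_supp; auto simp: unitv_def)+

lemma inner_comm: "inner n x y = inner n y x"
  unfolding inner_def by (simp add: mult.commute)

lemma orthogonal_same_column:
  assumes "b \<in> pos_roots t n" "b' \<in> pos_roots t n" "col b = j" "col b' = j" "b \<noteq> b'"
    and "inner n b b' = 0"
  shows "\<exists>k. j < k \<and> (b = RPlus j k \<and> b' = RMinus j k \<or> b = RMinus j k \<and> b' = RPlus j k)"
  using assms
  by (cases b; cases b') (auto simp del: vec.simps simp: inner_root unitv_def split: if_splits)

lemma orthogonal_to_pair:
  assumes "j < k" "b = RPlus j k \<and> b' = RMinus j k \<or> b = RMinus j k \<and> b' = RPlus j k"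
    and "b \<in> pos_roots t n" "inner n r b = 0" "inner n r b' = 0"
  shows "vec r j = 0 \<and> vec r k = 0"
proof -
  have "1 \<le> j" "k \<le> n"
    using assms(2,3) by auto
  then show ?thesis
    using assms(1,2,4,5) inner_comm[of n r b] inner_comm[of n r b']
    by (auto simp del: vec.simps simp: inner_root)
qed

subsection \<open>The recursion defining the sets M_j\<close>

lemma Mbefore_Suc [simp]: "Mbefore t n D (Suc j) = Mbefore t n D j \<union> Mcol t n D j"
  by (simp add: Mcol_def)

declare Mbefore.simps(2) [simp del]

lemma Mbefore_iff: "x \<in> Mbefore t n D j \<longleftrightarrow> (\<exists>l < j. x \<in> Mcol t n D l)"
  by (induction j) (auto simp: less_Suc_eq)

lemma Mbefore_mono: "p < j \<Longrightarrow> Mbefore t n D (Suc p) \<subseteq> Mbefore t n D j"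
  unfolding subset_iff Mbefore_iff by (meson less_Suc_eq_le le_less_trans)

lemma Mbefore_subset_Mset: "j \<le> Suc n \<Longrightarrow> Mbefore t n D j \<subseteq> Mset t n D"
  unfolding Mset_def subset_iff Mbefore_iff by (meson less_le_trans)

lemma Mcol_elem:
  assumes "g \<in> Mcol t n D j"
  obtains \<beta> h where "\<beta> \<in> D" "\<beta> \<in> pos_roots t n" "col \<beta> = j" "h \<in> pos_roots t n"
    "g \<in> pos_roots t n" "col_split \<beta> h g" "g \<notin> Mbefore t n D j" "h \<notin> Mbefore t n D j"
proof -
  obtain \<beta> where \<beta>: "\<beta> \<in> D" "\<beta> \<in> Cols t n j" "g \<in> Sminus t n \<beta>" "g \<notin> Mbefore t n D j"
    and partner: "\<forall>d \<in> pos_roots t n. vec d = vec \<beta> - vec g \<longrightarrow> d \<notin> Mbefore t n D j"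
    using assms unfolding Mcol_def Mstep_def by blast
  have \<beta>_pos: "\<beta> \<in> pos_roots t n" "col \<beta> = j"
    using \<beta>(2) by (auto simp: Cols_iff)
  obtain h where h: "h \<in> pos_roots t n" "col_split \<beta> h g"
    using Sminus_col_split[OF \<beta>(3) \<beta>_pos(1)] by blast
  have "h \<notin> Mbefore t n D j"
    using partner h col_split_vec[OF h(2)] by simp
  then show ?thesis
    using that \<beta> \<beta>_pos h Sminus_pos[OF \<beta>(3)] by blast
qed

lemma partner_in_earlier_M:
  assumes "b \<in> D" "col b = p" "b \<in> pos_roots t n" "x \<in> pos_roots t n" "y \<in> pos_roots t n"
    and "col_split b y x" "x \<notin> Mbefore t n D (Suc p)"
  shows "y \<in> Mbefore t n D p"
proof (rule ccontr)
  assume y_notin: "y \<notin> Mbefore t n D p"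
  have "x \<in> Sminus t n b"
    using col_split_S[OF assms(6,3,5,4)] by blast
  moreover have "\<forall>d \<in> pos_roots t n. vec d = vec b - vec x \<longrightarrow> d \<notin> Mbefore t n D p"
    using y_notin vec_inj_pos_roots[of _ t n y] assms(5) col_split_vec[OF assms(6)] by auto
  ultimately have "x \<in> Mcol t n D p"
    using assms(1-3,7) unfolding Mcol_def Mstep_def by (auto simp: Cols_iff)
  then show False
    using assms(7) by simp
qed

lemma decomposition_meets_M:
  assumes "r \<in> D" "col r = p" "r \<in> pos_roots t n" "x \<in> pos_roots t n" "y \<in> pos_roots t n"
    and "vec r = vec x + vec y"
  shows "x \<in> Mbefore t n D (Suc p) \<or> y \<in> Mbefore t n D (Suc p)"
  using col_split_cases[OF assms(3-6)] partner_in_earlier_M[OF assms(1-3)]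
    assms(4,5) by auto

lemma pair_no_common_Sminus:
  assumes "j < k" "b = RPlus j k \<and> b'' = RMinus j k \<or> b = RMinus j k \<and> b'' = RPlus j k"
    and "col_split b a c" "col_split b'' c' c"
  shows False
  using assms(2,3,4,1) unfolding col_split_def by (elim disjE exE conjE) simp_all

lemma no_orthogonal_chain:
  assumes "b \<in> pos_roots t n" "b' \<in> pos_roots t n" "b3 \<in> pos_roots t n"
    and "col_split b a c" "col_split b' d a" "col_split b3 f d"
    and "col b3 < col b'" "col b' < col b"
    and "inner n b b' = 0" "inner n b b3 = 0" "inner n b' b3 = 0"
  shows False
  using assms unfolding col_split_def
  by (elim disjE exE conjE)
     (simp_all del: vec.simps add: inner_root unitv_def split: if_splits)

lemma pair_Sminus_shape:
  assumes "j < k" "b = RPlus j k \<and> b' = RMinus j k \<or> b = RMinus j k \<and> b' = RPlus j k"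
    and "\<beta> = b \<or> \<beta> = b'" "col_split \<beta> h g" "int (col g) \<noteq> row b" "int (col g) \<noteq> - row b"
  shows "\<exists>m. j < m \<and> m < k \<and> (g = RPlus m k \<or> g = RMinus m k)"
  using assms(2-6,1) unfolding col_split_def by (elim disjE exE conjE) simp_all

text \<open>The possible shapes of a root d that cancels the k-th coordinate of g = eps_m +- eps_k
  in r = g + d, for a root r vanishing at j and k.\<close>
definition cancels_at :: "nat \<Rightarrow> nat \<Rightarrow> root \<Rightarrow> root \<Rightarrow> bool" where
  "cancels_at j k r d \<longleftrightarrow>
     (\<exists>x. j < x \<and> x < k \<and> d = RMinus x k \<and> vec r x \<ge> 1) \<or>
     (\<exists>x. j < x \<and> x < k \<and> d = RPlus x k \<and> vec r x \<ge> 1) \<or>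
     (\<exists>x. k < x \<and> d = RPlus k x \<and> vec r x \<ge> 1) \<or>
     (\<exists>x. k < x \<and> d = RMinus k x \<and> vec r x \<le> -1) \<or>
     (d = RShort k \<and> (\<exists>m. r = RShort m))"

lemma cancels_at_intro:
  assumes "j < m" "m < k" "g = RPlus m k \<or> g = RMinus m k"
    and "r \<in> pos_roots t n" "j < col r" "vec r j = 0" "vec r k = 0"
    and "col_split r g d \<or> col_split r d g"
  shows "cancels_at j k r d"
  using assms(8,3,1,2,4-7) unfolding col_split_def cancels_at_def
  by (elim disjE exE conjE) (simp_all del: vec.simps add: unitv_def split: if_splits)

lemma cancels_at_Sminus_of_pair:
  assumes "cancels_at j k r d" "j < k"
  obtains \<beta>' h' where "\<beta>' = RPlus j k \<or> \<beta>' = RMinus j k" "col_split \<beta>' h' d"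
  using assms(1) unfolding cancels_at_def
proof (elim disjE exE conjE)
  fix x assume "j < x" "x < k" "d = RMinus x k"
  then show thesis using that[of "RMinus j k" "RMinus j x"] by (simp add: col_split_def)
next
  fix x assume "j < x" "x < k" "d = RPlus x k"
  then show thesis using that[of "RPlus j k" "RMinus j x"] by (simp add: col_split_def)
next
  fix x assume "k < x" "d = RPlus k x"
  then show thesis using that[of "RPlus j k" "RMinus j x"] assms(2) by (simp add: col_split_def)
next
  fix x assume "k < x" "d = RMinus k x"
  then show thesis using that[of "RPlus j k" "RPlus j x"] assms(2) by (simp add: col_split_def)
next
  fix m assume "d = RShort k" "r = RShort m"
  then show thesis using that[of "RPlus j k" "RShort j"] assms(2) by (simp add: col_split_def)
qed

lemma cancels_at_partner_shape:
  assumes "cancels_at j k r d" "j < k" "\<beta>' = RPlus j k \<or> \<beta>' = RMinus j k" "col_split \<beta>' h' d"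
  shows "(\<exists>x. j < x \<and> h' = RMinus j x \<and> vec r x \<ge> 1) \<or>
         (\<exists>x. j < x \<and> h' = RPlus j x \<and> vec r x \<le> -1) \<or>
         (h' = RShort j \<and> (\<exists>m. r = RShort m))"
  using assms(1,3,4,2) unfolding col_split_def cancels_at_def
  by (elim disjE exE conjE) (simp_all del: vec.simps)

lemma partner_not_Sminus_of_orthogonal:
  assumes "(\<exists>x. j < x \<and> h' = RMinus j x \<and> vec r x \<ge> 1) \<or>
           (\<exists>x. j < x \<and> h' = RPlus j x \<and> vec r x \<le> -1) \<or>
           (h' = RShort j \<and> (\<exists>m. r = RShort m))"
    and "col_split b4 y h'" "b4 \<in> pos_roots t n" "col b4 < j" "vec b4 j = 0"
    and "inner n b4 r = 0" "r \<in> pos_roots t n" "j < col r"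
    and "\<not> (\<exists>i k. r = RShort i \<and> b4 = RShort k)"
  shows False
proof -
  have "\<And>q. q < col r \<Longrightarrow> vec r q = 0"
    using vec_left_of_col[OF assms(7)] by blast
  then show ?thesis
    using assms(1-6,8,9) unfolding col_split_def
    by (elim disjE exE conjE) (simp_all del: vec.simps add: inner_root unitv_def)
qed

lemma orthogonal_setD:
  assumes "orthogonal_set t n D"
  shows "x \<in> D \<Longrightarrow> x \<in> pos_roots t n"
    and "x \<in> D \<Longrightarrow> y \<in> D \<Longrightarrow> x \<noteq> y \<Longrightarrow> inner n x y = 0"
  using assms unfolding orthogonal_set_def by auto

lemma part_a:
  assumes orth: "orthogonal_set t n D"
    and b: "b \<in> D" "col b = j" and a: "a \<in> Splus t n b"
    and c: "c \<in> Mcol t n D j" "vec c = vec b - vec a"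
    and b': "b' \<in> D" and d: "d \<in> pos_roots t n" "vec b' = vec a + vec d"
  shows "col b' = j"
proof -
  note D_pos = orthogonal_setD(1)[OF orth] and D_orth = orthogonal_setD(2)[OF orth]
  obtain q where q: "q \<in> pos_roots t n" "col_split b a q"
    using Splus_col_split[OF a D_pos[OF b(1)]] by blast
  have a_pos: "a \<in> pos_roots t n"
    using col_split_first_pos[OF q(2) D_pos[OF b(1)] q(1)] .
  obtain \<beta> h where \<beta>: "\<beta> \<in> D" "\<beta> \<in> pos_roots t n" "col \<beta> = j" "h \<in> pos_roots t n"
    "c \<in> pos_roots t n" "col_split \<beta> h c" and h_notin: "h \<notin> Mbefore t n D j"
    using Mcol_elem[OF c(1)] by blast
  have "q = c"
    using vec_inj_pos_roots[OF q(1) \<beta>(5)] col_split_vec[OF q(2)] c(2) by simp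
  have "\<beta> = b"
  proof (rule ccontr)
    assume "\<beta> \<noteq> b"
    then obtain k where "j < k" "b = RPlus j k \<and> \<beta> = RMinus j k \<or> b = RMinus j k \<and> \<beta> = RPlus j k"
      using orthogonal_same_column[OF D_pos[OF b(1)] \<beta>(2) b(2) \<beta>(3)] D_orth[OF b(1) \<beta>(1)] by metis
    then show False
      using pair_no_common_Sminus q(2) \<beta>(6) \<open>q = c\<close> by blast
  qed
  then have "h = a"
    using vec_inj_pos_roots[OF \<beta>(4) a_pos] col_split_vec[OF \<beta>(6)] col_split_vec[OF q(2)]
      \<open>q = c\<close> by simp
  then have a_notin: "a \<notin> Mbefore t n D j"
    using h_notin by simp
  have col_a: "col a = j"
    using col_split_col[OF q(2)] b(2) by simp
  show "col b' = j"
  proof (rule ccontr)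
    assume col_b': "col b' \<noteq> j"
    have b'_pos: "b' \<in> pos_roots t n"
      using D_pos[OF b'] .
    have split_b': "col_split b' d a"
      using col_split_cases[OF b'_pos a_pos d] col_split_col[of b' a d] col_a col_b' by auto
    have earlier: "col b' < j"
      using col_split_col[OF split_b'] col_a col_b' by simp
    then have "d \<in> Mbefore t n D (col b')"
      using partner_in_earlier_M[OF b' refl b'_pos a_pos d(1) split_b'] a_notin
        Mbefore_mono[OF earlier] by blast
    then obtain l where l: "l < col b'" "d \<in> Mcol t n D l"
      by (auto simp: Mbefore_iff)
    obtain b3 f where b3: "b3 \<in> D" "b3 \<in> pos_roots t n" "col b3 = l" "col_split b3 f d"
      using Mcol_elem[OF l(2)] by metis
    have "b \<noteq> b'" "b \<noteq> b3" "b' \<noteq> b3"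
      using earlier l(1) b(2) b3(3) by auto
    then show False
      using no_orthogonal_chain[OF D_pos[OF b(1)] b'_pos b3(2) q(2) split_b' b3(4)] earlier l(1)
        b3(3) b(2) D_orth[OF b(1) b'] D_orth[OF b(1) b3(1)] D_orth[OF b' b3(1)] by simp
  qed
qed

text \<open>Part (b) for a root of D left of column j: it is a sum g + d with g in M_j and d in P,
  contradicting decomposition_meets_M.\<close>
lemma part_b_earlier_column:
  assumes orth: "orthogonal_set t n D"
    and g: "g \<in> Mcol t n D j" and r: "r \<in> D" "col r < j"
    and d: "d \<in> Pset t n D" "vec r = vec g + vec d"
  shows False
proof -
  obtain \<beta> h where g_pos: "g \<in> pos_roots t n" and g_notin: "g \<notin> Mbefore t n D j"
    and "\<beta> \<in> pos_roots t n" "col \<beta> = j"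
    using Mcol_elem[OF g] by metis
  then have "col r \<le> n"
    using pos_root_col[of \<beta> t n] r(2) by simp
  have d_notin: "d \<notin> Mset t n D" and d_pos: "d \<in> pos_roots t n"
    using d(1) unfolding Pset_def by auto
  have "g \<notin> Mbefore t n D (Suc (col r))"
    using g_notin Mbefore_mono[OF r(2)] by blast
  moreover have "d \<notin> Mbefore t n D (Suc (col r))"
    using d_notin Mbefore_subset_Mset[of "Suc (col r)" n] \<open>col r \<le> n\<close> by auto
  ultimately show False
    using decomposition_meets_M[OF r(1) refl orthogonal_setD(1)[OF orth r(1)] g_pos d_pos d(2)]
    by blast
qed

text \<open>Column j contains eps_j + eps_k and
  eps_j - eps_k, g = eps_m +- eps_k, and r vanishes at j and k; so d cancels the k-th
  coordinate of g and is the S^- summand of eps_j +- eps_k.  As d is not in M, its partner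
  h' lies in some M_l, l < j, coming from a root b4 of D that cannot be orthogonal to r.\<close>
lemma part_b_later_column:
  assumes orth: "orthogonal_set t n D" and A: "assumptionA t D"
    and pair: "D \<inter> Cols t n j = {b, b'}" "b \<noteq> b'"
    and g: "g \<in> Mcol t n D j" "int (col g) \<noteq> row b" "int (col g) \<noteq> - row b"
    and r: "r \<in> D" "j < col r"
    and d: "d \<in> Pset t n D" "vec r = vec g + vec d"
  shows False
proof -
  note D_pos = orthogonal_setD(1)[OF orth] and D_orth = orthogonal_setD(2)[OF orth]
  have b: "b \<in> D" "b \<in> pos_roots t n" "col b = j" and b': "b' \<in> D" "b' \<in> pos_roots t n" "col b' = j"
    using pair(1) by (auto simp: Cols_iff)
  obtain k where k: "j < k" "b = RPlus j k \<and> b' = RMinus j k \<or> b = RMinus j k \<and> b' = RPlus j k"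
    using orthogonal_same_column[OF b(2) b'(2) b(3) b'(3) pair(2) D_orth[OF b(1) b'(1) pair(2)]] by blast
  obtain \<beta> h where \<beta>: "\<beta> \<in> D" "\<beta> \<in> pos_roots t n" "col \<beta> = j" "g \<in> pos_roots t n"
    "col_split \<beta> h g"
    using Mcol_elem[OF g(1)] by metis
  have "\<beta> \<in> D \<inter> Cols t n j"
    using \<beta>(1-3) by (simp add: Cols_iff)
  then have "\<beta> = b \<or> \<beta> = b'"
    using pair(1) by blast
  then obtain m where m: "j < m" "m < k" "g = RPlus m k \<or> g = RMinus m k"
    using pair_Sminus_shape[OF k _ \<beta>(5) g(2,3)] by blast
  have r_pos: "r \<in> pos_roots t n" and d_pos: "d \<in> pos_roots t n" and d_notin: "d \<notin> Mset t n D"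
    using D_pos[OF r(1)] d(1) unfolding Pset_def by auto
  have "r \<noteq> b" "r \<noteq> b'"
    using r(2) b(3) b'(3) by auto
  then have r_orth: "inner n r b = 0" "inner n r b' = 0"
    using D_orth[OF r(1) b(1)] D_orth[OF r(1) b'(1)] by simp_all
  have cancels: "cancels_at j k r d"
    using cancels_at_intro[OF m r_pos r(2)] orthogonal_to_pair[OF k b(2) r_orth]
      col_split_cases[OF r_pos \<beta>(4) d_pos d(2)] by blast
  obtain \<beta>' h' where \<beta>': "\<beta>' = RPlus j k \<or> \<beta>' = RMinus j k" "col_split \<beta>' h' d"
    using cancels_at_Sminus_of_pair[OF cancels k(1)] by blast
  have \<beta>'_D: "\<beta>' \<in> D" "\<beta>' \<in> pos_roots t n" "col \<beta>' = j"
    using \<beta>'(1) k(2) b b' by auto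
  have "d \<notin> Mbefore t n D (Suc j)"
    using d_notin Mbefore_subset_Mset[of "Suc j" n] pos_root_col[OF b(2)] b(3) by auto
  then have "h' \<in> Mbefore t n D j"
    using partner_in_earlier_M[OF \<beta>'_D(1,3,2) d_pos _ \<beta>'(2)]
      col_split_first_pos[OF \<beta>'(2) \<beta>'_D(2) d_pos] by blast
  then obtain l where l: "l < j" "h' \<in> Mcol t n D l"
    by (auto simp: Mbefore_iff)
  obtain b4 y where b4: "b4 \<in> D" "b4 \<in> pos_roots t n" "col b4 = l" "col_split b4 y h'"
    using Mcol_elem[OF l(2)] by metis
  have "b4 \<noteq> b" "b4 \<noteq> b'" "b4 \<noteq> r"
    using b4(3) l(1) b(3) b'(3) r(2) by auto
  then have "vec b4 j = 0" and b4_r: "inner n b4 r = 0"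
    using orthogonal_to_pair[OF k b(2) D_orth[OF b4(1) b(1)] D_orth[OF b4(1) b'(1)]]
      D_orth[OF b4(1) r(1)] by simp_all
  moreover have "\<not> (\<exists>i k. r = RShort i \<and> b4 = RShort k)"
  proof clarify
    fix i k
    assume short: "r = RShort i" "b4 = RShort k"
    then have "t = TB"
      using r_pos by simp
    then have "i = k"
      using A r(1) b4(1) short unfolding assumptionA_def by blast
    then show False
      using short b4(3) l(1) r(2) by simp
  qed
  ultimately show False
    using partner_not_Sminus_of_orthogonal[OF cancels_at_partner_shape[OF cancels k(1) \<beta>']
        b4(4,2) _ _ _ r_pos r(2)] b4(3) l(1) by blast
qed

theorem lemma2p7:
  fixes t :: rtype and n :: nat and D :: "root set"
  assumes orth: "orthogonal_set t n D"
    and A: "assumptionA t D"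
  shows
   "(\<forall>j b a. b \<in> D \<inter> Cols t n j \<longrightarrow> a \<in> Splus t n b \<longrightarrow>
       (\<exists>c \<in> Mcol t n D j. vec c = vec b - vec a) \<longrightarrow>
       (\<forall>b' \<in> D. \<forall>d \<in> pos_roots t n. vec b' = vec a + vec d \<longrightarrow> b' \<in> Cols t n j))
  \<and> (\<forall>j b b' g. D \<inter> Cols t n j = {b, b'} \<longrightarrow> b \<noteq> b' \<longrightarrow>
       g \<in> Mcol t n D j \<longrightarrow> int (col g) \<noteq> row b \<longrightarrow> int (col g) \<noteq> - row b \<longrightarrow>
       (\<forall>r \<in> D. \<forall>d \<in> Pset t n D. vec r = vec g + vec d \<longrightarrow> r \<in> Cols t n j))"
proof (intro conjI allI impI ballI)
  fix j b a b' d
  assume b: "b \<in> D \<inter> Cols t n j" and a: "a \<in> Splus t n b"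
    and "\<exists>c \<in> Mcol t n D j. vec c = vec b - vec a"
    and b': "b' \<in> D" and d: "d \<in> pos_roots t n" "vec b' = vec a + vec d"
  then obtain c where c: "c \<in> Mcol t n D j" "vec c = vec b - vec a"
    by blast
  have "b \<in> D" "col b = j"
    using b by (simp_all add: Cols_iff)
  then have "col b' = j"
    using part_a[OF orth _ _ a c b' d] by blast
  then show "b' \<in> Cols t n j"
    using orthogonal_setD(1)[OF orth b'] by (simp add: Cols_iff)
next
  fix j b b' g r d
  assume pair: "D \<inter> Cols t n j = {b, b'}" "b \<noteq> b'"
    and g: "g \<in> Mcol t n D j" "int (col g) \<noteq> row b" "int (col g) \<noteq> - row b"
    and r: "r \<in> D" and d: "d \<in> Pset t n D" "vec r = vec g + vec d"
  have "\<not> col r < j"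
    using part_b_earlier_column[OF orth g(1) r _ d] by blast
  moreover have "\<not> j < col r"
    using part_b_later_column[OF orth A pair g r _ d] by blast
  ultimately show "r \<in> Cols t n j"
    using orthogonal_setD(1)[OF orth r] by (simp add: Cols_iff)
qed

end
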